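(* Let $r\ge 1$ be an integer. The order of a $[1,r;4]$-mixed cage is $2(r+2)$. Moreover, a mixed graph $H$ is a $[1,r;4]$-mixed cage if and only if it is obtained from the complete bipartite graph $K_{r+2,r+2}$ by choosing a $2$-factor $F$ of $K_{r+2,r+2}$, orienting every cycle of $F$ as a directed cycle (these become the arcs of $H$), and keeping all remaining edges of $K_{r+2,r+2}$ as undirected edges.
   Context: A mixed graph is a finite simple graph that may contain both edges and arcs. A $[z,r;g]$-mixed graph is a mixed graph in which every vertex is the tail of exactly $z$ arcs, the head of exactly $z$ arcs, and is incident with exactly $r$ edges, and whose girth is $g$. Walks traverse edges in either direction and arcs only in their direction; a cycle is a closed walk with no repeated vertices (other than start = end) and no repeated edge or arc; the girth is the length of a shortest cycle. A $[z,r;g]$-mixed cage is a $[z,r;g]$-mixed graph of minimum order. *)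

theory Defs
  imports Main
begin

record 'a mixgraph =
  verts :: "'a set"
  edges :: "'a set set"
  arcs  :: "('a \<times> 'a) set"

definition mixed_graph :: "'a mixgraph \<Rightarrow> bool" where
  "mixed_graph G \<longleftrightarrow>
     finite (verts G) \<and>
     (\<forall>e\<in>edges G. \<exists>u v. u \<noteq> v \<and> e = {u, v} \<and> u \<in> verts G \<and> v \<in> verts G) \<and>
     (\<forall>(u, v)\<in>arcs G. u \<noteq> v \<and> u \<in> verts G \<and> v \<in> verts G) \<and>
     (\<forall>(u, v)\<in>arcs G. {u, v} \<notin> edges G)"

definition link_step :: "'a mixgraph \<Rightarrow> 'a \<Rightarrow> ('a set + ('a \<times> 'a)) \<Rightarrow> 'a \<Rightarrow> bool" where
  "link_step G a l b \<longleftrightarrow>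
     (case l of Inl e \<Rightarrow> e \<in> edges G \<and> e = {a, b} \<and> a \<noteq> b
              | Inr p \<Rightarrow> p \<in> arcs G \<and> p = (a, b))"

definition is_cycle :: "'a mixgraph \<Rightarrow> 'a list \<Rightarrow> ('a set + ('a \<times> 'a)) list \<Rightarrow> bool" where
  "is_cycle G xs ls \<longleftrightarrow>
     length ls \<ge> 1 \<and> length xs = length ls + 1 \<and>
     hd xs = last xs \<and> distinct (butlast xs) \<and> distinct ls \<and>
     set xs \<subseteq> verts G \<and>
     (\<forall>i < length ls. link_step G (xs ! i) (ls ! i) (xs ! Suc i))"

definition has_cycle_of_length :: "'a mixgraph \<Rightarrow> nat \<Rightarrow> bool" where
  "has_cycle_of_length G k \<longleftrightarrow> (\<exists>xs ls. is_cycle G xs ls \<and> length ls = k)"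

definition girth_is :: "'a mixgraph \<Rightarrow> nat \<Rightarrow> bool" where
  "girth_is G g \<longleftrightarrow> has_cycle_of_length G g \<and> (\<forall>k < g. \<not> has_cycle_of_length G k)"

definition mixed_zrg :: "'a mixgraph \<Rightarrow> nat \<Rightarrow> nat \<Rightarrow> nat \<Rightarrow> bool" where
  "mixed_zrg G z r g \<longleftrightarrow>
     mixed_graph G \<and>
     (\<forall>v\<in>verts G. card {w. (v, w) \<in> arcs G} = z \<and>
                  card {w. (w, v) \<in> arcs G} = z \<and>
                  card {e\<in>edges G. v \<in> e} = r) \<and>
     girth_is G g"

text \<open>Minimum order is taken over all mixed graphs; every finite mixed graph is isomorphic
  to one on natural-number vertices, so it suffices to compare with those.\<close>
definition mixed_cage :: "'a mixgraph \<Rightarrow> nat \<Rightarrow> nat \<Rightarrow> nat \<Rightarrow> bool" where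
  "mixed_cage H z r g \<longleftrightarrow>
     mixed_zrg H z r g \<and>
     (\<forall>G :: nat mixgraph. mixed_zrg G z r g \<longrightarrow> card (verts H) \<le> card (verts G))"

text \<open>H arises from K_{n,n} (n = r+2) on its own vertex set with parts X, Y:
  F is a 2-factor of K_{X,Y}, the arcs orient every cycle of F as a directed cycle
  (each F-edge gets exactly one direction, every vertex has in- and out-degree 1),
  and the remaining edges of K_{X,Y} are the undirected edges.\<close>
definition from_Knn_2factor :: "'a mixgraph \<Rightarrow> nat \<Rightarrow> bool" where
  "from_Knn_2factor H n \<longleftrightarrow>
     (\<exists>X Y F.
        verts H = X \<union> Y \<and> X \<inter> Y = {} \<and> finite X \<and> finite Y \<and>
        card X = n \<and> card Y = n \<and>
        F \<subseteq> {{x, y} | x y. x \<in> X \<and> y \<in> Y} \<and>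
        (\<forall>v\<in>X \<union> Y. card {e\<in>F. v \<in> e} = 2) \<and>
        arcs H \<subseteq> {(u, v). {u, v} \<in> F} \<and>
        (\<forall>u v. {u, v} \<in> F \<longrightarrow> ((u, v) \<in> arcs H \<longleftrightarrow> (v, u) \<notin> arcs H)) \<and>
        (\<forall>v\<in>X \<union> Y. card {w. (v, w) \<in> arcs H} = 1 \<and> card {w. (w, v) \<in> arcs H} = 1) \<and>
        edges H = {{x, y} | x y. x \<in> X \<and> y \<in> Y} - F)"

end

theory Submission
  imports Defs
begin

text \<open>In a [1,r;4]-mixed graph every vertex has r + 2 neighbours in the underlying graph, and
  that graph is triangle-free: two arcs at a vertex can neither both leave nor both enter it,
  so a triangle could be traversed as a 3-cycle. Adjacent vertices u, v therefore have disjoint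
  neighbourhoods, so there are at least 2(r + 2) vertices, and with exactly 2(r + 2) vertices
  every vertex is adjacent precisely to the other side of N(u) \<union> N(v): the underlying graph is
  K_{r+2,r+2} and the arcs, having in- and out-degree 1, form an oriented 2-factor.
  Conversely, such a graph is bipartite, hence has no odd cycles; it has no 2-cycles because
  no two arcs are opposite; and it contains a 4-cycle. Orienting a Hamiltonian cycle of
  K_{r+2,r+2} shows that such graphs exist.\<close>

lemma card_Collect_eq_1_iff: "card {x. P x} = 1 \<longleftrightarrow> (\<exists>!x. P x)"
  by (auto simp: card_1_singleton_iff) (metis singleton_iff mem_Collect_eq)+

section \<open>Cycles in mixed graphs\<close>

definition step :: "'a mixgraph \<Rightarrow> 'a \<Rightarrow> 'a \<Rightarrow> bool" where
  "step G a b \<longleftrightarrow> a \<noteq> b \<and> ({a, b} \<in> edges G \<or> (a, b) \<in> arcs G)"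

lemma step_imp_link_step: "step G a b \<Longrightarrow> \<exists>l. link_step G a l b"
proof -
  assume "step G a b"
  then have "link_step G a (Inl {a, b}) b \<or> link_step G a (Inr (a, b)) b"
    by (auto simp: step_def link_step_def)
  then show ?thesis by blast
qed

lemma link_step_ends: "link_step G a l b \<Longrightarrow> link_step G c l d \<Longrightarrow> {a, b} = {c, d}"
  by (auto simp: link_step_def split: sum.splits)

lemma has_cycle_of_length_if_steps:
  assumes "distinct vs" "3 \<le> length vs" "set vs \<subseteq> verts G"
    and steps: "\<forall>i < length vs. step G (vs ! i) (vs ! (Suc i mod length vs))"
  shows "has_cycle_of_length G (length vs)"
proof -
  define k where "k = length vs"
  define xs where "xs = vs @ [hd vs]"
  define ls where "ls = map (\<lambda>i. SOME l. link_step G (vs ! i) l (vs ! (Suc i mod k))) [0..<k]"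
  have k: "3 \<le> k" "vs \<noteq> []" using assms(2) by (auto simp: k_def)
  have xs_Suc: "xs ! Suc i = vs ! (Suc i mod k)" if "i < k" for i
    using that k by (auto simp: xs_def k_def nth_append hd_conv_nth mod_Suc)
  have links: "link_step G (vs ! i) (ls ! i) (vs ! (Suc i mod k))" if "i < k" for i
  proof -
    have "step G (vs ! i) (vs ! (Suc i mod k))" using that steps by (simp add: k_def)
    then show ?thesis using that someI_ex[OF step_imp_link_step] by (simp add: ls_def)
  qed
  have "distinct ls"
  proof (unfold distinct_conv_nth, intro allI impI)
    fix i j assume ij: "i < length ls" "j < length ls" "i \<noteq> j"
    then have ijk: "i < k" "j < k" by (simp_all add: ls_def)
    show "ls ! i \<noteq> ls ! j"
    proof
      assume "ls ! i = ls ! j"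
      \<comment> \<open>so i and j are cyclic successors of each other, impossible when k \<ge> 3\<close>
      then have "{vs ! i, vs ! (Suc i mod k)} = {vs ! j, vs ! (Suc j mod k)}"
        using link_step_ends links ijk by metis
      moreover have "Suc i mod k < length vs" "Suc j mod k < length vs" using k by (auto simp: k_def)
      ultimately have "i = Suc j mod k \<and> Suc i mod k = j"
        using ij ijk assms(1) by (auto simp: doubleton_eq_iff nth_eq_iff_index_eq k_def)
      then show False using ijk k(1) by (auto simp: mod_Suc split: if_splits)
    qed
  qed
  moreover have len: "length ls = k" "length xs = Suc k" by (simp_all add: ls_def xs_def k_def)
  moreover have "\<forall>i < length ls. link_step G (xs ! i) (ls ! i) (xs ! Suc i)"
  proof (intro allI impI)
    fix i assume "i < length ls"
    then have "i < k" "xs ! i = vs ! i" by (simp_all add: len xs_def nth_append k_def)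
    then show "link_step G (xs ! i) (ls ! i) (xs ! Suc i)" using links xs_Suc by simp
  qed
  ultimately have "is_cycle G xs ls"
    using assms k by (auto simp: is_cycle_def xs_def)
  then show ?thesis
    unfolding has_cycle_of_length_def k_def[symmetric] using len by blast
qed

lemma has_cycle_of_length_3_if_steps:
  assumes "distinct [a, b, c]" "a \<in> verts G" "b \<in> verts G" "c \<in> verts G"
    and "step G a b" "step G b c" "step G c a"
  shows "has_cycle_of_length G 3"
proof -
  have "has_cycle_of_length G (length [a, b, c])"
    using assms by (intro has_cycle_of_length_if_steps) (auto simp: less_Suc_eq)
  then show ?thesis by (simp add: numeral_3_eq_3)
qed

lemma two_links_between_are_opposite_arcs:
  assumes "mixed_graph G" "link_step G a l b" "link_step G b l' a" "l \<noteq> l'"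
  shows "(a, b) \<in> arcs G \<and> (b, a) \<in> arcs G"
  using assms by (auto simp: link_step_def mixed_graph_def insert_commute split: sum.splits)

lemma has_cycle_of_length_2_iff:
  assumes "mixed_graph G"
  shows "has_cycle_of_length G 2 \<longleftrightarrow> (\<exists>a b. (a, b) \<in> arcs G \<and> (b, a) \<in> arcs G)"
proof
  assume "has_cycle_of_length G 2"
  then obtain xs ls where c: "is_cycle G xs ls" "length ls = 2"
    by (auto simp: has_cycle_of_length_def)
  then obtain a b c l l' where "xs = [a, b, c]" "ls = [l, l']"
    by (auto simp: is_cycle_def numeral_eq_Suc length_Suc_conv)
  with c have "link_step G a l b" "link_step G b l' a" "l \<noteq> l'"
    by (auto simp: is_cycle_def)
  then show "\<exists>a b. (a, b) \<in> arcs G \<and> (b, a) \<in> arcs G"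
    using two_links_between_are_opposite_arcs[OF assms] by blast
next
  assume "\<exists>a b. (a, b) \<in> arcs G \<and> (b, a) \<in> arcs G"
  then obtain a b where ab: "(a, b) \<in> arcs G" "(b, a) \<in> arcs G" by blast
  then have "is_cycle G [a, b, a] [Inr (a, b), Inr (b, a)]"
    using assms by (auto simp: is_cycle_def link_step_def mixed_graph_def less_Suc_eq numeral_eq_Suc)
  then show "has_cycle_of_length G 2" unfolding has_cycle_of_length_def by fastforce
qed

lemma no_odd_cycle_if_bipartite:
  assumes bipartite: "\<And>a l b. link_step G a l b \<Longrightarrow> a \<in> X \<longleftrightarrow> b \<notin> X" and "odd k"
  shows "\<not> has_cycle_of_length G k"
proof
  assume "has_cycle_of_length G k"
  then obtain xs ls where c: "is_cycle G xs ls" "length ls = k"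
    by (auto simp: has_cycle_of_length_def)
  have side: "xs ! i \<in> X \<longleftrightarrow> (xs ! 0 \<in> X \<longleftrightarrow> even i)" if "i \<le> k" for i
    using that
  proof (induction i)
    case (Suc i)
    then have "link_step G (xs ! i) (ls ! i) (xs ! Suc i)" using c by (simp add: is_cycle_def)
    then show ?case using Suc bipartite by fastforce
  qed simp
  have "xs \<noteq> []" "length xs = Suc k" using c by (auto simp: is_cycle_def)
  then have "xs ! k = xs ! 0" using c by (simp add: is_cycle_def hd_conv_nth last_conv_nth)
  then show False using side[of k] \<open>odd k\<close> by simp
qed

definition adjacent :: "'a mixgraph \<Rightarrow> 'a \<Rightarrow> 'a \<Rightarrow> bool" where
  "adjacent G x y \<longleftrightarrow> step G x y \<or> step G y x"

lemma adjacent_iff: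
  "adjacent G v w \<longleftrightarrow> v \<noteq> w \<and> ({v, w} \<in> edges G \<or> (v, w) \<in> arcs G \<or> (w, v) \<in> arcs G)"
  by (auto simp: adjacent_def step_def insert_commute)

lemma edges_at_eq_image:
  assumes "mixed_graph G"
  shows "{e \<in> edges G. v \<in> e} = (\<lambda>w. {v, w}) ` {w. {v, w} \<in> edges G}"
proof (intro set_eqI iffI)
  fix e assume e: "e \<in> {e \<in> edges G. v \<in> e}"
  then obtain p q where "e = {p, q}" using assms unfolding mixed_graph_def by blast
  then have "e = {v, if v = p then q else p}" using e by auto
  then show "e \<in> (\<lambda>w. {v, w}) ` {w. {v, w} \<in> edges G}" using e by auto
qed auto

section \<open>Regular triangle-free graphs\<close>

locale triangle_free_regular =
  fixes V :: "'a set" and A :: "'a \<Rightarrow> 'a \<Rightarrow> bool" and d :: nat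
  assumes finite_V: "finite V"
    and adjacent_in_V: "A x y \<Longrightarrow> y \<in> V"
    and sym: "A x y \<Longrightarrow> A y x"
    and triangle_free: "\<not> (A x y \<and> A y z \<and> A z x)"
    and degree: "x \<in> V \<Longrightarrow> card {y. A x y} = d"
begin

abbreviation nbhd :: "'a \<Rightarrow> 'a set" where
  "nbhd x \<equiv> {y. A x y}"

lemma nbhd_subset: "nbhd x \<subseteq> V"
  using adjacent_in_V by blast

lemma finite_nbhd: "finite (nbhd x)"
  using finite_subset[OF nbhd_subset finite_V] .

lemma nbhds_disjoint: "A u v \<Longrightarrow> nbhd u \<inter> nbhd v = {}"
  using triangle_free sym by blast

lemma card_nbhd_Un:
  assumes "A u v"
  shows "card (nbhd u \<union> nbhd v) = 2 * d"
proof -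
  have "u \<in> V" "v \<in> V" using assms adjacent_in_V sym by blast+
  then show ?thesis
    using card_Un_disjoint[OF finite_nbhd finite_nbhd nbhds_disjoint[OF assms]] degree by simp
qed

lemma double_degree_le_card: "A u v \<Longrightarrow> 2 * d \<le> card V"
  using card_nbhd_Un card_mono[OF finite_V] nbhd_subset by (metis Un_least)

lemma V_eq_nbhd_Un:
  assumes "A u v" "card V = 2 * d"
  shows "V = nbhd u \<union> nbhd v"
  using card_subset_eq[OF finite_V] card_nbhd_Un[OF assms(1)] assms(2) nbhd_subset
  by (metis Un_least)

lemma nbhd_eq_nbhd_of_neighbour:
  assumes "A u v" "card V = 2 * d" "A u w"
  shows "nbhd w = nbhd v"
proof -
  have "nbhd w \<inter> nbhd u = {}" using nbhds_disjoint[OF sym[OF assms(3)]] by blast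
  then have "nbhd w \<subseteq> nbhd v" using V_eq_nbhd_Un[OF assms(1,2)] nbhd_subset by blast
  moreover have "card (nbhd w) = card (nbhd v)"
    using assms adjacent_in_V sym degree by metis
  ultimately show ?thesis using card_subset_eq[OF finite_nbhd] by blast
qed

lemma adjacent_iff_across:
  assumes "A u v" "card V = 2 * d" "x \<in> V"
  shows "A x y \<longleftrightarrow> (x \<in> nbhd u \<and> y \<in> nbhd v) \<or> (x \<in> nbhd v \<and> y \<in> nbhd u)"
proof -
  have "A v u" using sym assms(1) .
  then have "x \<in> nbhd u \<Longrightarrow> nbhd x = nbhd v" "x \<in> nbhd v \<Longrightarrow> nbhd x = nbhd u"
    using nbhd_eq_nbhd_of_neighbour assms(1,2) by blast+
  then show ?thesis
    using V_eq_nbhd_Un[OF assms(1,2)] nbhds_disjoint[OF assms(1)] assms(3) by blast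
qed

end

section \<open>Oriented 2-factors of complete bipartite graphs\<close>

definition complete_bipartite_edges :: "'a set \<Rightarrow> 'a set \<Rightarrow> 'a set set" where
  "complete_bipartite_edges X Y = {{x, y} | x y. x \<in> X \<and> y \<in> Y}"

lemma doubleton_in_complete_bipartite_edges:
  "{x, y} \<in> complete_bipartite_edges X Y \<longleftrightarrow> (x \<in> X \<and> y \<in> Y) \<or> (x \<in> Y \<and> y \<in> X)"
  by (auto simp: complete_bipartite_edges_def doubleton_eq_iff)

lemma complete_bipartite_edges_commute:
  "complete_bipartite_edges X Y = complete_bipartite_edges Y X"
  by (auto simp: complete_bipartite_edges_def insert_commute)

lemma complete_bipartite_edges_at:
  assumes "v \<in> X" "v \<notin> Y"
  shows "{e \<in> complete_bipartite_edges X Y. v \<in> e} = (\<lambda>w. {v, w}) ` Y"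
  using assms by (auto simp: complete_bipartite_edges_def)

locale Knn_oriented_2factor =
  fixes H :: "'a mixgraph" and n :: nat and X Y :: "'a set" and F :: "'a set set"
  assumes verts_eq: "verts H = X \<union> Y" and disjoint: "X \<inter> Y = {}"
    and finite_X: "finite X" and finite_Y: "finite Y"
    and card_X: "card X = n" and card_Y: "card Y = n"
    and F_subset: "F \<subseteq> complete_bipartite_edges X Y"
    and F_degree: "\<forall>v \<in> X \<union> Y. card {e \<in> F. v \<in> e} = 2"
    and arcs_subset: "arcs H \<subseteq> {(u, v). {u, v} \<in> F}"
    and orientation: "\<forall>u v. {u, v} \<in> F \<longrightarrow> ((u, v) \<in> arcs H \<longleftrightarrow> (v, u) \<notin> arcs H)"
    and arc_degrees: "\<forall>v \<in> X \<union> Y. card {w. (v, w) \<in> arcs H} = 1 \<and> card {w. (w, v) \<in> arcs H} = 1"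
    and edges_eq: "edges H = complete_bipartite_edges X Y - F"
begin

lemma edge_across: "{a, b} \<in> edges H \<Longrightarrow> (a \<in> X \<and> b \<in> Y) \<or> (a \<in> Y \<and> b \<in> X)"
  using edges_eq by (simp add: doubleton_in_complete_bipartite_edges)

lemma arc_across: "(a, b) \<in> arcs H \<Longrightarrow> (a \<in> X \<and> b \<in> Y) \<or> (a \<in> Y \<and> b \<in> X)"
  using arcs_subset F_subset by (force simp: doubleton_in_complete_bipartite_edges)

lemma link_step_across:
  assumes "link_step H a l b"
  shows "a \<in> X \<longleftrightarrow> b \<notin> X"
proof -
  have "{a, b} \<in> edges H \<or> (a, b) \<in> arcs H"
    using assms by (auto simp: link_step_def split: sum.splits)
  then show ?thesis using edge_across arc_across disjoint by blast
qed

lemma mixed_graph: "mixed_graph H"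
proof -
  have "\<exists>u v. u \<noteq> v \<and> e = {u, v} \<and> u \<in> verts H \<and> v \<in> verts H" if e: "e \<in> edges H" for e
  proof -
    obtain x y where "e = {x, y}" "x \<in> X" "y \<in> Y"
      using e edges_eq by (auto simp: complete_bipartite_edges_def)
    moreover have "x \<noteq> y" using calculation disjoint by blast
    ultimately show ?thesis using verts_eq by blast
  qed
  moreover have "a \<noteq> b \<and> a \<in> verts H \<and> b \<in> verts H" if "(a, b) \<in> arcs H" for a b
    using arc_across[OF that] disjoint verts_eq by blast
  moreover have "{a, b} \<notin> edges H" if "(a, b) \<in> arcs H" for a b
    using that arcs_subset edges_eq by blast
  ultimately show ?thesis using verts_eq finite_X finite_Y by (auto simp: mixed_graph_def)
qed

lemma card_verts: "card (verts H) = 2 * n"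
  using verts_eq card_Un_disjoint[OF finite_X finite_Y disjoint] card_X card_Y by simp

lemma unique_out_arc: "v \<in> verts H \<Longrightarrow> \<exists>!w. (v, w) \<in> arcs H"
  using arc_degrees verts_eq by (simp flip: card_Collect_eq_1_iff)

lemma unique_in_arc: "v \<in> verts H \<Longrightarrow> \<exists>!w. (w, v) \<in> arcs H"
  using arc_degrees verts_eq by (simp flip: card_Collect_eq_1_iff)

lemma no_opposite_arcs: "(a, b) \<in> arcs H \<Longrightarrow> (b, a) \<notin> arcs H"
  using arcs_subset orientation by blast

lemma step_across:
  assumes "{x, y} \<in> complete_bipartite_edges X Y" "(y, x) \<notin> arcs H"
  shows "step H x y"
proof -
  have "x \<noteq> y" using assms(1) disjoint by (auto simp: doubleton_in_complete_bipartite_edges)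
  moreover have "{x, y} \<in> edges H \<or> (x, y) \<in> arcs H" using assms orientation edges_eq by blast
  ultimately show ?thesis by (simp add: step_def)
qed

lemma card_edges_at:
  assumes "v \<in> verts H"
  shows "card {e \<in> edges H. v \<in> e} = n - 2"
proof -
  obtain B where B: "finite B" "card B = n"
    "{e \<in> complete_bipartite_edges X Y. v \<in> e} = (\<lambda>w. {v, w}) ` B"
  proof (cases "v \<in> X")
    case True
    then show thesis
      using that finite_Y card_Y complete_bipartite_edges_at[of v X Y] disjoint by blast
  next
    case False
    then have "v \<in> Y" using assms verts_eq by blast
    then show thesis
      using that finite_X card_X complete_bipartite_edges_at[of v Y X] disjoint
      by (metis complete_bipartite_edges_commute disjoint_iff)
  qed
  have "inj_on (\<lambda>w. {v, w}) B" by (simp add: inj_on_def doubleton_eq_iff)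
  then have "card {e \<in> complete_bipartite_edges X Y. v \<in> e} = n" using B by (simp add: card_image)
  moreover have "{e \<in> F. v \<in> e} \<subseteq> {e \<in> complete_bipartite_edges X Y. v \<in> e}"
    using F_subset by blast
  moreover have "card {e \<in> F. v \<in> e} = 2" using F_degree assms verts_eq by blast
  moreover have "{e \<in> edges H. v \<in> e} =
      {e \<in> complete_bipartite_edges X Y. v \<in> e} - {e \<in> F. v \<in> e}"
    using edges_eq by blast
  ultimately show ?thesis using B by (simp add: card_Diff_subset finite_subset)
qed

lemma no_cycle_shorter_than_4:
  assumes "k < 4"
  shows "\<not> has_cycle_of_length H k"
proof -
  have "k = 0 \<or> k = 2 \<or> odd k" using assms by presburger
  moreover have "\<not> has_cycle_of_length H 0" by (simp add: has_cycle_of_length_def is_cycle_def)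
  moreover have "\<not> has_cycle_of_length H 2"
    using has_cycle_of_length_2_iff[OF mixed_graph] no_opposite_arcs by blast
  moreover have "\<not> has_cycle_of_length H k" if "odd k"
    using no_odd_cycle_if_bipartite[OF link_step_across that] .
  ultimately show ?thesis by blast
qed

text \<open>The 4-cycle is x \<rightarrow> y \<rightarrow> p, then p to y', then y' \<rightarrow> x, built from the out-arcs of x and y
  and the in-arc of x. The pair {p, y'} can be traversed from p because the only arc leaving y'
  goes to x.\<close>
lemma has_cycle_of_length_4:
  assumes "0 < n"
  shows "has_cycle_of_length H 4"
proof -
  obtain x where x: "x \<in> X" using assms card_X by fastforce
  then have "x \<in> verts H" using verts_eq by blast
  then obtain y y' where xy: "(x, y) \<in> arcs H" and y'x: "(y', x) \<in> arcs H"
    using unique_out_arc unique_in_arc by blast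
  then have "y \<in> verts H" using mixed_graph by (auto simp: mixed_graph_def)
  then obtain p where yp: "(y, p) \<in> arcs H" using unique_out_arc by blast
  have sides: "y \<in> Y" "y' \<in> Y" "p \<in> X"
    using arc_across[OF xy] arc_across[OF y'x] arc_across[OF yp] x disjoint by blast+
  have "p \<noteq> x" "y \<noteq> y'" using no_opposite_arcs xy yp y'x by blast+
  then have "(y', p) \<notin> arcs H" using unique_out_arc y'x verts_eq sides by blast
  then have "step H p y'"
    using step_across sides by (simp add: doubleton_in_complete_bipartite_edges)
  moreover have "step H x y" "step H y p" "step H y' x"
    using xy yp y'x mixed_graph by (auto simp: step_def mixed_graph_def)
  moreover have "distinct [x, y, p, y']" "set [x, y, p, y'] \<subseteq> verts H"
    using sides x \<open>p \<noteq> x\<close> \<open>y \<noteq> y'\<close> disjoint verts_eq by auto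
  ultimately have "has_cycle_of_length H (length [x, y, p, y'])"
    by (intro has_cycle_of_length_if_steps) (auto simp: less_Suc_eq)
  then show ?thesis by (simp add: numeral_eq_Suc)
qed

lemma mixed_zrg:
  assumes "n = r + 2"
  shows "mixed_zrg H 1 r 4"
  using mixed_graph arc_degrees verts_eq card_edges_at assms has_cycle_of_length_4
    no_cycle_shorter_than_4
  by (simp add: mixed_zrg_def girth_is_def)

end

lemma from_Knn_2factor_iff:
  "from_Knn_2factor H n \<longleftrightarrow> (\<exists>X Y F. Knn_oriented_2factor H n X Y F)"
  unfolding from_Knn_2factor_def Knn_oriented_2factor_def complete_bipartite_edges_def
  by (simp only: conj_assoc)

section \<open>Mixed graphs of type [1,r;4]\<close>

definition arc_edges :: "'a mixgraph \<Rightarrow> 'a set set" where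
  "arc_edges G = {{x, y} | x y. (x, y) \<in> arcs G}"

locale mixed_1r4_graph =
  fixes G :: "'a mixgraph" and r :: nat
  assumes zrg: "mixed_zrg G 1 r 4"
begin

lemma mixed_graph: "mixed_graph G"
  using zrg by (simp add: mixed_zrg_def)

lemma finite_verts: "finite (verts G)"
  using mixed_graph by (simp add: mixed_graph_def)

lemma arc_endpoints: "(a, b) \<in> arcs G \<Longrightarrow> a \<noteq> b \<and> a \<in> verts G \<and> b \<in> verts G"
  using mixed_graph by (auto simp: mixed_graph_def)

lemma arc_not_edge: "(a, b) \<in> arcs G \<Longrightarrow> {a, b} \<notin> edges G"
  using mixed_graph by (auto simp: mixed_graph_def)

lemma edge_endpoints: "{a, b} \<in> edges G \<Longrightarrow> a \<noteq> b \<and> a \<in> verts G \<and> b \<in> verts G"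
  using mixed_graph unfolding mixed_graph_def by (metis doubleton_eq_iff)

lemma unique_out_arc: "v \<in> verts G \<Longrightarrow> \<exists>!w. (v, w) \<in> arcs G"
  using zrg by (simp add: mixed_zrg_def flip: card_Collect_eq_1_iff)

lemma unique_in_arc: "v \<in> verts G \<Longrightarrow> \<exists>!w. (w, v) \<in> arcs G"
  using zrg by (simp add: mixed_zrg_def flip: card_Collect_eq_1_iff)

lemma out_arc_eq: "(v, a) \<in> arcs G \<Longrightarrow> (v, b) \<in> arcs G \<Longrightarrow> a = b"
  using unique_out_arc arc_endpoints by blast

lemma in_arc_eq: "(a, v) \<in> arcs G \<Longrightarrow> (b, v) \<in> arcs G \<Longrightarrow> a = b"
  using unique_in_arc arc_endpoints by blast

lemma girth: "has_cycle_of_length G 4" "k < 4 \<Longrightarrow> \<not> has_cycle_of_length G k"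
  using zrg by (simp_all add: mixed_zrg_def girth_is_def)

lemma no_opposite_arcs: "(a, b) \<in> arcs G \<Longrightarrow> (b, a) \<notin> arcs G"
  using girth(2)[of 2] has_cycle_of_length_2_iff[OF mixed_graph] by auto

lemma adjacent_in_verts: "adjacent G x y \<Longrightarrow> y \<in> verts G"
  using arc_endpoints edge_endpoints by (auto simp: adjacent_def step_def insert_commute)

text \<open>Two arcs at a common vertex can neither both leave it nor both enter it.\<close>
lemma triangle_steps:
  assumes "adjacent G a b" "adjacent G b c" "adjacent G c a"
  shows "(step G a b \<and> step G b c \<and> step G c a) \<or> (step G a c \<and> step G c b \<and> step G b a)"
  using assms out_arc_eq in_arc_eq unfolding adjacent_def step_def
  by (smt (verit) insert_commute)

lemma triangle_free: "\<not> (adjacent G a b \<and> adjacent G b c \<and> adjacent G c a)"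
proof
  assume abc: "adjacent G a b \<and> adjacent G b c \<and> adjacent G c a"
  then have "distinct [a, b, c]" "a \<in> verts G" "b \<in> verts G" "c \<in> verts G"
    using adjacent_in_verts by (auto simp: adjacent_def step_def)
  then have "has_cycle_of_length G 3"
    using triangle_steps abc has_cycle_of_length_3_if_steps[of a b c G]
      has_cycle_of_length_3_if_steps[of a c b G]
    by auto
  then show False using girth(2) by simp
qed

lemma card_nbhd:
  assumes v: "v \<in> verts G"
  shows "card {w. adjacent G v w} = r + 2"
proof -
  obtain a where a: "(v, a) \<in> arcs G" using ex1_implies_ex[OF unique_out_arc[OF v]] by blast
  obtain b where b: "(b, v) \<in> arcs G" using ex1_implies_ex[OF unique_in_arc[OF v]] by blast
  define E where "E = {w. {v, w} \<in> edges G}"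
  have "v \<noteq> a" "v \<noteq> b" using arc_endpoints a b by blast+
  moreover have "v \<noteq> w" if "w \<in> E" for w using that edge_endpoints by (simp add: E_def)
  ultimately have nbhd: "{w. adjacent G v w} = insert a (insert b E)"
    using out_arc_eq[OF a] in_arc_eq[OF b] a b unfolding adjacent_iff E_def by blast
  have "card ((\<lambda>w. {v, w}) ` E) = r"
    using zrg v edges_at_eq_image[OF mixed_graph] by (simp add: mixed_zrg_def E_def)
  moreover have "inj_on (\<lambda>w. {v, w}) E" by (simp add: inj_on_def doubleton_eq_iff)
  ultimately have "card E = r" by (simp add: card_image)
  moreover have "finite E"
    using edge_endpoints by (intro finite_subset[OF _ finite_verts]) (auto simp: E_def)
  moreover have "a \<notin> E" "b \<notin> E"
    using arc_not_edge[OF a] arc_not_edge[OF b] unfolding E_def by (simp_all add: insert_commute)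
  moreover have "a \<noteq> b" using no_opposite_arcs[OF a] b by blast
  ultimately show ?thesis using nbhd by simp
qed

sublocale triangle_free_regular "verts G" "adjacent G" "r + 2"
proof
  show "adjacent G x y \<Longrightarrow> adjacent G y x" for x y by (auto simp: adjacent_def)
qed (fact finite_verts adjacent_in_verts triangle_free card_nbhd)+

lemma ex_adjacent: "\<exists>u v. adjacent G u v"
proof -
  obtain xs ls where "is_cycle G xs ls" "length ls = 4"
    using girth(1) by (auto simp: has_cycle_of_length_def)
  then obtain v where v: "v \<in> verts G" by (cases xs) (auto simp: is_cycle_def)
  then obtain a where "(v, a) \<in> arcs G" using ex1_implies_ex[OF unique_out_arc[OF v]] by blast
  then show ?thesis using arc_endpoints by (auto simp: adjacent_iff)
qed

lemma order_ge: "2 * (r + 2) \<le> card (verts G)"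
  using ex_adjacent double_degree_le_card by blast

lemma arc_edges_at:
  assumes "(w, a) \<in> arcs G" "(b, w) \<in> arcs G"
  shows "{e \<in> arc_edges G. w \<in> e} = {{w, a}, {b, w}}"
proof (intro set_eqI iffI)
  fix e assume "e \<in> {e \<in> arc_edges G. w \<in> e}"
  then obtain x y where xy: "e = {x, y}" "(x, y) \<in> arcs G" "w \<in> e"
    by (auto simp: arc_edges_def)
  then have "x = w \<and> y = a \<or> x = b \<and> y = w"
    using out_arc_eq[OF assms(1)] in_arc_eq[OF assms(2)] by blast
  then show "e \<in> {{w, a}, {b, w}}" using xy(1) by blast
qed (use assms in \<open>unfold arc_edges_def, blast\<close>)

lemma card_arc_edges_at:
  assumes w: "w \<in> verts G"
  shows "card {e \<in> arc_edges G. w \<in> e} = 2"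
proof -
  obtain a where a: "(w, a) \<in> arcs G" using ex1_implies_ex[OF unique_out_arc[OF w]] by blast
  obtain b where b: "(b, w) \<in> arcs G" using ex1_implies_ex[OF unique_in_arc[OF w]] by blast
  have "a \<noteq> b" "w \<noteq> a" using no_opposite_arcs[OF a] b arc_endpoints[OF a] by blast+
  then have "{w, a} \<noteq> {b, w}" by (simp add: doubleton_eq_iff)
  then show ?thesis using arc_edges_at[OF a b] by simp
qed

context
  fixes u v assumes uv: "adjacent G u v" and order: "card (verts G) = 2 * (r + 2)"
begin

lemma adjacent_iff_complete_bipartite:
  "x \<in> verts G \<Longrightarrow> adjacent G x y \<longleftrightarrow> {x, y} \<in> complete_bipartite_edges (nbhd u) (nbhd v)"
  using adjacent_iff_across[OF uv order] by (simp add: doubleton_in_complete_bipartite_edges)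

lemma arc_edges_subset_complete_bipartite:
  "arc_edges G \<subseteq> complete_bipartite_edges (nbhd u) (nbhd v)"
proof
  fix e assume "e \<in> arc_edges G"
  then obtain x y where e: "e = {x, y}" "(x, y) \<in> arcs G" by (auto simp: arc_edges_def)
  then have "x \<in> verts G" "adjacent G x y" using arc_endpoints by (simp_all add: adjacent_iff)
  then show "e \<in> complete_bipartite_edges (nbhd u) (nbhd v)"
    using adjacent_iff_complete_bipartite e(1) by blast
qed

lemma edges_eq_complete_bipartite_minus_arc_edges:
  "edges G = complete_bipartite_edges (nbhd u) (nbhd v) - arc_edges G"
proof (intro set_eqI iffI)
  fix e assume e: "e \<in> edges G"
  then obtain x y where xy: "e = {x, y}" using mixed_graph unfolding mixed_graph_def by blast
  then have "x \<in> verts G" "adjacent G x y" using e edge_endpoints by (simp_all add: adjacent_iff)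
  then have "e \<in> complete_bipartite_edges (nbhd u) (nbhd v)"
    using adjacent_iff_complete_bipartite xy by blast
  moreover have "e \<notin> arc_edges G" using e arc_not_edge by (auto simp: arc_edges_def)
  ultimately show "e \<in> complete_bipartite_edges (nbhd u) (nbhd v) - arc_edges G" by blast
next
  fix e assume e: "e \<in> complete_bipartite_edges (nbhd u) (nbhd v) - arc_edges G"
  then obtain x y where xy: "e = {x, y}" "x \<in> nbhd u"
    by (auto simp: complete_bipartite_edges_def)
  then have "adjacent G x y" using e adjacent_iff_complete_bipartite nbhd_subset by blast
  then have "e \<in> edges G \<or> (x, y) \<in> arcs G \<or> (y, x) \<in> arcs G"
    using xy(1) by (simp add: adjacent_iff)
  moreover have "(x, y) \<notin> arcs G" "(y, x) \<notin> arcs G"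
    using e xy(1) by (auto simp: arc_edges_def insert_commute)
  ultimately show "e \<in> edges G" by blast
qed

lemma Knn_oriented_2factor_nbhds:
  "Knn_oriented_2factor G (r + 2) (nbhd u) (nbhd v) (arc_edges G)"
proof
  show V: "verts G = nbhd u \<union> nbhd v" by (rule V_eq_nbhd_Un[OF uv order])
  show "nbhd u \<inter> nbhd v = {}" by (rule nbhds_disjoint[OF uv])
  show "finite (nbhd u)" "finite (nbhd v)" by (rule finite_nbhd)+
  have "u \<in> verts G" "v \<in> verts G" using uv adjacent_in_verts sym by blast+
  then show "card (nbhd u) = r + 2" "card (nbhd v) = r + 2" using degree by blast+
  show "arc_edges G \<subseteq> complete_bipartite_edges (nbhd u) (nbhd v)"
    by (rule arc_edges_subset_complete_bipartite)
  show "edges G = complete_bipartite_edges (nbhd u) (nbhd v) - arc_edges G"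
    by (rule edges_eq_complete_bipartite_minus_arc_edges)
  show "\<forall>w \<in> nbhd u \<union> nbhd v. card {e \<in> arc_edges G. w \<in> e} = 2"
    using card_arc_edges_at V by blast
  show "arcs G \<subseteq> {(p, q). {p, q} \<in> arc_edges G}" by (auto simp: arc_edges_def)
  show "\<forall>p q. {p, q} \<in> arc_edges G \<longrightarrow> ((p, q) \<in> arcs G \<longleftrightarrow> (q, p) \<notin> arcs G)"
    using no_opposite_arcs by (auto simp: arc_edges_def doubleton_eq_iff)
  show "\<forall>w \<in> nbhd u \<union> nbhd v.
      card {x. (w, x) \<in> arcs G} = 1 \<and> card {x. (x, w) \<in> arcs G} = 1"
    using zrg V by (simp add: mixed_zrg_def)
qed

end

lemma from_Knn_2factor_if_order: "card (verts G) = 2 * (r + 2) \<Longrightarrow> from_Knn_2factor G (r + 2)"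
  using ex_adjacent Knn_oriented_2factor_nbhds from_Knn_2factor_iff by blast

end

section \<open>An oriented Hamiltonian cycle\<close>

definition cyclic_succ :: "nat \<Rightarrow> nat \<Rightarrow> nat" where
  "cyclic_succ m k = (if Suc k = m then 0 else Suc k)"

lemma cyclic_succ_less: "k < m \<Longrightarrow> cyclic_succ m k < m"
  by (auto simp: cyclic_succ_def)

lemma cyclic_succ_inj: "a < m \<Longrightarrow> b < m \<Longrightarrow> cyclic_succ m a = cyclic_succ m b \<Longrightarrow> a = b"
  by (auto simp: cyclic_succ_def split: if_splits)

lemma cyclic_succ_surj: "v < m \<Longrightarrow> \<exists>k < m. cyclic_succ m k = v"
  by (cases v) (auto simp: cyclic_succ_def intro: exI[of _ "m - 1"])

lemma cyclic_succ_neq: "2 \<le> m \<Longrightarrow> k < m \<Longrightarrow> cyclic_succ m k \<noteq> k"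
  by (auto simp: cyclic_succ_def)

lemma cyclic_succ_succ_neq: "3 \<le> m \<Longrightarrow> k < m \<Longrightarrow> cyclic_succ m (cyclic_succ m k) \<noteq> k"
  by (auto simp: cyclic_succ_def)

lemma even_cyclic_succ_iff: "even m \<Longrightarrow> k < m \<Longrightarrow> even (cyclic_succ m k) \<longleftrightarrow> odd k"
  by (auto simp: cyclic_succ_def)

definition hamiltonian_cycle_arcs :: "nat \<Rightarrow> (nat \<times> nat) set" where
  "hamiltonian_cycle_arcs m = {(k, cyclic_succ m k) | k. k < m}"

definition hamiltonian_cycle_edges :: "nat \<Rightarrow> nat set set" where
  "hamiltonian_cycle_edges m = {{k, cyclic_succ m k} | k. k < m}"

lemma hamiltonian_cycle_edges_subset:
  assumes "even m"
  shows "hamiltonian_cycle_edges m \<subseteq>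
    complete_bipartite_edges {k. k < m \<and> even k} {k. k < m \<and> odd k}"
proof
  fix e assume "e \<in> hamiltonian_cycle_edges m"
  then obtain k where k: "k < m" "e = {k, cyclic_succ m k}"
    by (auto simp: hamiltonian_cycle_edges_def)
  then show "e \<in> complete_bipartite_edges {k. k < m \<and> even k} {k. k < m \<and> odd k}"
    using even_cyclic_succ_iff[OF assms k(1)] cyclic_succ_less[OF k(1)]
    by (simp add: doubleton_in_complete_bipartite_edges)
qed

lemma hamiltonian_cycle_edges_at:
  assumes "v < m" "p < m" "cyclic_succ m p = v"
  shows "{e \<in> hamiltonian_cycle_edges m. v \<in> e} = {{v, cyclic_succ m v}, {p, v}}"
proof (intro set_eqI iffI)
  fix e assume "e \<in> {e \<in> hamiltonian_cycle_edges m. v \<in> e}"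
  then obtain k where k: "k < m" "e = {k, cyclic_succ m k}" "v \<in> e"
    by (auto simp: hamiltonian_cycle_edges_def)
  then have "v = k \<or> k = p" using cyclic_succ_inj[OF k(1) assms(2)] assms(3) by auto
  then show "e \<in> {{v, cyclic_succ m v}, {p, v}}" using k(2) assms(3) by blast
next
  fix e assume "e \<in> {{v, cyclic_succ m v}, {p, v}}"
  then show "e \<in> {e \<in> hamiltonian_cycle_edges m. v \<in> e}"
    using assms unfolding hamiltonian_cycle_edges_def by blast
qed

lemma card_hamiltonian_cycle_edges_at:
  assumes "3 \<le> m" "v < m"
  shows "card {e \<in> hamiltonian_cycle_edges m. v \<in> e} = 2"
proof -
  obtain p where p: "p < m" "cyclic_succ m p = v" using cyclic_succ_surj assms(2) by blast
  have "cyclic_succ m v \<noteq> p" using cyclic_succ_succ_neq[OF assms(1) p(1)] p(2) by simp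
  moreover have "cyclic_succ m v \<noteq> v" using cyclic_succ_neq assms by simp
  ultimately show ?thesis using hamiltonian_cycle_edges_at[OF assms(2) p] by (simp add: doubleton_eq_iff)
qed

lemma hamiltonian_cycle_orientation:
  assumes "3 \<le> m" "{u, v} \<in> hamiltonian_cycle_edges m"
  shows "(u, v) \<in> hamiltonian_cycle_arcs m \<longleftrightarrow> (v, u) \<notin> hamiltonian_cycle_arcs m"
proof -
  obtain k where k: "k < m" "{u, v} = {k, cyclic_succ m k}"
    using assms(2) by (auto simp: hamiltonian_cycle_edges_def)
  have "(k, cyclic_succ m k) \<in> hamiltonian_cycle_arcs m"
    using k(1) by (auto simp: hamiltonian_cycle_arcs_def)
  moreover have "(cyclic_succ m k, k) \<notin> hamiltonian_cycle_arcs m"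
  proof
    assume "(cyclic_succ m k, k) \<in> hamiltonian_cycle_arcs m"
    then have "k = cyclic_succ m (cyclic_succ m k)" by (auto simp: hamiltonian_cycle_arcs_def)
    then show False using cyclic_succ_succ_neq[OF assms(1) k(1)] by simp
  qed
  ultimately show ?thesis using k(2) by (auto simp: doubleton_eq_iff)
qed

lemma card_hamiltonian_cycle_arcs_at:
  assumes "v < m"
  shows "card {w. (v, w) \<in> hamiltonian_cycle_arcs m} = 1 \<and>
    card {w. (w, v) \<in> hamiltonian_cycle_arcs m} = 1"
proof -
  obtain p where p: "p < m" "cyclic_succ m p = v" using cyclic_succ_surj assms by blast
  have "{w. (v, w) \<in> hamiltonian_cycle_arcs m} = {cyclic_succ m v}"
    using assms by (auto simp: hamiltonian_cycle_arcs_def)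
  moreover have "{w. (w, v) \<in> hamiltonian_cycle_arcs m} = {p}"
  proof (intro set_eqI iffI)
    fix w assume "w \<in> {w. (w, v) \<in> hamiltonian_cycle_arcs m}"
    then have "w < m" "cyclic_succ m w = cyclic_succ m p"
      using p(2) by (auto simp: hamiltonian_cycle_arcs_def)
    then show "w \<in> {p}" using cyclic_succ_inj p(1) by blast
  qed (use p in \<open>auto simp: hamiltonian_cycle_arcs_def\<close>)
  ultimately show ?thesis by simp
qed

lemma card_even_below_double: "card {k. k < 2 * n \<and> even k} = n"
proof -
  have "{k. k < 2 * n \<and> even k} = (\<lambda>i. 2 * i) ` {..<n}" by (auto elim!: evenE)
  then show ?thesis by (simp add: card_image inj_on_def)
qed

lemma card_odd_below_double: "card {k. k < 2 * n \<and> odd k} = n"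
proof -
  have "{k. k < 2 * n \<and> odd k} = (\<lambda>i. 2 * i + 1) ` {..<n}" by (auto elim!: oddE)
  then show ?thesis by (simp add: card_image inj_on_def)
qed

definition Knn_with_hamiltonian_cycle :: "nat \<Rightarrow> nat mixgraph" where
  "Knn_with_hamiltonian_cycle n =
     \<lparr>verts = {..<2 * n},
      edges = complete_bipartite_edges {k. k < 2 * n \<and> even k} {k. k < 2 * n \<and> odd k}
              - hamiltonian_cycle_edges (2 * n),
      arcs = hamiltonian_cycle_arcs (2 * n)\<rparr>"

lemma Knn_oriented_2factor_hamiltonian_cycle:
  assumes "2 \<le> n"
  shows "Knn_oriented_2factor (Knn_with_hamiltonian_cycle n) n
           {k. k < 2 * n \<and> even k} {k. k < 2 * n \<and> odd k} (hamiltonian_cycle_edges (2 * n))"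
proof
  have m: "3 \<le> 2 * n" using assms by simp
  then show "\<forall>u v. {u, v} \<in> hamiltonian_cycle_edges (2 * n) \<longrightarrow>
      ((u, v) \<in> arcs (Knn_with_hamiltonian_cycle n) \<longleftrightarrow>
       (v, u) \<notin> arcs (Knn_with_hamiltonian_cycle n))"
    using hamiltonian_cycle_orientation by (simp add: Knn_with_hamiltonian_cycle_def)
  show "\<forall>v \<in> {k. k < 2 * n \<and> even k} \<union> {k. k < 2 * n \<and> odd k}.
      card {e \<in> hamiltonian_cycle_edges (2 * n). v \<in> e} = 2"
    using card_hamiltonian_cycle_edges_at[OF m] by blast
  show "\<forall>v \<in> {k. k < 2 * n \<and> even k} \<union> {k. k < 2 * n \<and> odd k}.
      card {w. (v, w) \<in> arcs (Knn_with_hamiltonian_cycle n)} = 1 \<and>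
      card {w. (w, v) \<in> arcs (Knn_with_hamiltonian_cycle n)} = 1"
    using card_hamiltonian_cycle_arcs_at[of _ "2 * n"]
    unfolding Knn_with_hamiltonian_cycle_def by auto
  show "hamiltonian_cycle_edges (2 * n) \<subseteq>
      complete_bipartite_edges {k. k < 2 * n \<and> even k} {k. k < 2 * n \<and> odd k}"
    by (simp add: hamiltonian_cycle_edges_subset)
  show "arcs (Knn_with_hamiltonian_cycle n) \<subseteq> {(u, v). {u, v} \<in> hamiltonian_cycle_edges (2 * n)}"
    by (auto simp: Knn_with_hamiltonian_cycle_def hamiltonian_cycle_arcs_def
        hamiltonian_cycle_edges_def)
qed (auto simp: Knn_with_hamiltonian_cycle_def card_even_below_double card_odd_below_double)

section \<open>Cages\<close>

lemma from_Knn_2factor_hamiltonian_cycle: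
  "2 \<le> n \<Longrightarrow> from_Knn_2factor (Knn_with_hamiltonian_cycle n) n"
  unfolding from_Knn_2factor_iff using Knn_oriented_2factor_hamiltonian_cycle by blast

lemma mixed_zrg_if_from_Knn_2factor:
  "from_Knn_2factor H (r + 2) \<Longrightarrow> mixed_zrg H 1 r 4 \<and> card (verts H) = 2 * (r + 2)"
  using Knn_oriented_2factor.mixed_zrg Knn_oriented_2factor.card_verts
  unfolding from_Knn_2factor_iff by blast

lemma mixed_cage_1r4_iff:
  fixes H :: "'a mixgraph"
  shows "mixed_cage H 1 r 4 \<longleftrightarrow> from_Knn_2factor H (r + 2)"
proof
  assume cage: "mixed_cage H 1 r 4"
  let ?G = "Knn_with_hamiltonian_cycle (r + 2)"
  have "mixed_zrg ?G 1 r 4" "card (verts ?G) = 2 * (r + 2)"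
    using mixed_zrg_if_from_Knn_2factor[OF from_Knn_2factor_hamiltonian_cycle] by simp_all
  then have "card (verts H) \<le> 2 * (r + 2)" using cage unfolding mixed_cage_def by metis
  moreover have "mixed_1r4_graph H r" using cage by (simp add: mixed_cage_def mixed_1r4_graph_def)
  ultimately show "from_Knn_2factor H (r + 2)"
    using mixed_1r4_graph.order_ge mixed_1r4_graph.from_Knn_2factor_if_order le_antisym by blast
next
  assume "from_Knn_2factor H (r + 2)"
  then have "mixed_zrg H 1 r 4" "card (verts H) = 2 * (r + 2)"
    using mixed_zrg_if_from_Knn_2factor by blast+
  then show "mixed_cage H 1 r 4"
    using mixed_1r4_graph.order_ge unfolding mixed_cage_def mixed_1r4_graph_def by metis
qed

theorem theorem3:
  fixes r :: nat
  assumes "r \<ge> 1"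
  shows "(\<exists>G :: nat mixgraph. mixed_cage G 1 r 4) \<and>
         (\<forall>H :: 'a mixgraph. mixed_cage H 1 r 4 \<longrightarrow> card (verts H) = 2 * (r + 2)) \<and>
         (\<forall>H :: 'a mixgraph. mixed_cage H 1 r 4 \<longleftrightarrow> from_Knn_2factor H (r + 2))"
  using mixed_cage_1r4_iff from_Knn_2factor_hamiltonian_cycle[of "r + 2"]
    mixed_zrg_if_from_Knn_2factor
  by (metis le_add2)

end
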